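(* Let the state and action spaces be finite and consider an offline–online linear mixture MDP as in the context. If the feature mapping $\phi$ of the offline MDP is not uniformly learnable, then for any offline behavior policies and any design of the auxiliary vectors $\{\widetilde V_{m,h}\}$, we have $\tau(\delta)=\frac{\lambda}{M^{\mathrm{off}}}$ for every $\delta\in(0,1)$.
   Context: The offline MDP has finite state space $\mathcal S$, finite action space $\mathcal A$, horizon $H$, and transitions $P^{\mathrm{off}}(s'\mid s,a)=\langle\theta^{\mathrm{off},*},\phi(s'\mid s,a)\rangle$ for a known feature map $\phi:\mathcal S\times\mathcal A\times\mathcal S\to\mathbb R^d$ (with $\sum_{s'}|\phi_j(s'\mid s,a)|\le1$). $\phi(\cdot\mid s,a)\in\mathbb R^{d\times|\mathcal S|}$ has columns $\phi(s'\mid s,a)$. Offline data: $M^{\mathrm{off}}$ trajectories of length $H$ generated by (possibly adaptive) behavior policies in the offline MDP, with states/actions $s^{\mathrm{off}}_{m,h},a^{\mathrm{off}}_{m,h}$. The learner chooses auxiliary vectors $\widetilde V_{m,h}\in\mathbb R^{|\mathcal S|}$ ($\widetilde V_{m,H+1}=0$), and $G_{\mathrm{off}}=\sum_{m=1}^{M^{\mathrm{off}}}\sum_{h=1}^H x^{\mathrm{off}}_{m,h}(x^{\mathrm{off}}_{m,h})^\top$ with $x^{\mathrm{off}}_{m,h}=\phi(\cdot\mid s^{\mathrm{off}}_{m,h},a^{\mathrm{off}}_{m,h})\widetilde V_{m,h+1}$. For fixed $\lambda>0$ and $\delta\in(0,1)$, $\tau(\delta)=\sup\{z\ge0:\Pr(\lambda_{\min}(\lambda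 I+G_{\mathrm{off}})/M^{\mathrm{off}}\ge z)\ge1-\delta\}$. Uniform learnability: $\phi$ is uniformly learnable if there exist fixed positive integers $I,L$, probe vectors $V_1,\dots,V_L\in[-1,1]^{|\mathcal S|}$ and state–action pairs $(s_1,a_1),\dots,(s_I,a_I)$ such that $\lambda_{\min}\big(\sum_{i=1}^I\sum_{l=1}^L\phi(\cdot\mid s_i,a_i)V_l(\phi(\cdot\mid s_i,a_i)V_l)^\top\big)\ge\kappa$ for some constant $\kappa>0$. *)

theory Defs
  imports "HOL-Probability.Probability"
begin

definition lambda_min :: "real^'d^'d \<Rightarrow> real" where
  "lambda_min A = Inf {\<mu>. \<exists>v. v \<noteq> 0 \<and> A *v v = \<mu> *\<^sub>R v}"

definition outer :: "real^'d \<Rightarrow> real^'d \<Rightarrow> real^'d^'d" where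
  "outer x y = (\<chi> i j. x $ i * y $ j)"

definition phiV :: "('s::finite \<Rightarrow> 'a \<Rightarrow> 's \<Rightarrow> real^'d) \<Rightarrow> 's \<Rightarrow> 'a \<Rightarrow> ('s \<Rightarrow> real) \<Rightarrow> real^'d" where
  "phiV \<phi> s a V = (\<Sum>s'\<in>UNIV. V s' *\<^sub>R \<phi> s a s')"

definition uniformly_learnable :: "('s::finite \<Rightarrow> 'a::finite \<Rightarrow> 's \<Rightarrow> real^'d) \<Rightarrow> bool" where
  "uniformly_learnable \<phi> \<longleftrightarrow>
     (\<exists>I L :: nat. I > 0 \<and> L > 0 \<and>
        (\<exists>V :: nat \<Rightarrow> 's \<Rightarrow> real. (\<forall>l<L. \<forall>s'. \<bar>V l s'\<bar> \<le> 1) \<and>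
          (\<exists>sa :: nat \<Rightarrow> 's \<times> 'a. \<exists>\<kappa>>0.
             lambda_min (\<Sum>i<I. \<Sum>l<L. outer (phiV \<phi> (fst (sa i)) (snd (sa i)) (V l))
                                           (phiV \<phi> (fst (sa i)) (snd (sa i)) (V l))) \<ge> \<kappa>)))"

text \<open>A (possibly adaptive, history-dependent) behavior policy
  pi gets the previously completed trajectories, the current partial trajectory and the
  current state; the initial-state distribution mu may also depend on the past trajectories.\<close>
fun gen_ep :: "('s \<Rightarrow> 'a \<Rightarrow> 's pmf) \<Rightarrow> (('s \<times> 'a) list list \<Rightarrow> ('s \<times> 'a) list \<Rightarrow> 's \<Rightarrow> 'a pmf)
    \<Rightarrow> ('s \<times> 'a) list list \<Rightarrow> ('s \<times> 'a) list \<Rightarrow> 's \<Rightarrow> nat \<Rightarrow> ('s \<times> 'a) list pmf" where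
  "gen_ep P \<pi> past cur s 0 = return_pmf []"
| "gen_ep P \<pi> past cur s (Suc n) =
     bind_pmf (\<pi> past cur s) (\<lambda>a.
     bind_pmf (P s a) (\<lambda>s'.
     bind_pmf (gen_ep P \<pi> past (cur @ [(s, a)]) s' n) (\<lambda>rest.
     return_pmf ((s, a) # rest))))"

fun gen_data :: "('s \<Rightarrow> 'a \<Rightarrow> 's pmf) \<Rightarrow> (('s \<times> 'a) list list \<Rightarrow> 's pmf)
    \<Rightarrow> (('s \<times> 'a) list list \<Rightarrow> ('s \<times> 'a) list \<Rightarrow> 's \<Rightarrow> 'a pmf) \<Rightarrow> nat
    \<Rightarrow> ('s \<times> 'a) list list \<Rightarrow> nat \<Rightarrow> ('s \<times> 'a) list list pmf" where
  "gen_data P \<mu> \<pi> H past 0 = return_pmf past"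
| "gen_data P \<mu> \<pi> H past (Suc m) =
     bind_pmf (\<mu> past) (\<lambda>s1.
     bind_pmf (gen_ep P \<pi> past [] s1 H) (\<lambda>ep.
     gen_data P \<mu> \<pi> H (past @ [ep]) m))"

text \<open>Gram matrix G_off for data D (0-based indices: episode m < M, step h < H);
  Vt D m h is the learner's auxiliary vector (may depend on the data), Vt D m (h+1)
  playing the role of V~_{m,h+1}; Vt D m H corresponds to V~_{m,H+1}.\<close>
definition G_off :: "('s::finite \<Rightarrow> 'a \<Rightarrow> 's \<Rightarrow> real^'d) \<Rightarrow> (('s \<times> 'a) list list \<Rightarrow> nat \<Rightarrow> nat \<Rightarrow> 's \<Rightarrow> real)
    \<Rightarrow> nat \<Rightarrow> nat \<Rightarrow> ('s \<times> 'a) list list \<Rightarrow> real^'d^'d" where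
  "G_off \<phi> Vt M H D =
     (\<Sum>m<M. \<Sum>h<H.
        outer (phiV \<phi> (fst (D ! m ! h)) (snd (D ! m ! h)) (Vt D m (Suc h)))
              (phiV \<phi> (fst (D ! m ! h)) (snd (D ! m ! h)) (Vt D m (Suc h))))"

definition tau :: "('s::finite \<Rightarrow> 'a \<Rightarrow> 's \<Rightarrow> real^'d) \<Rightarrow> (('s \<times> 'a) list list \<Rightarrow> nat \<Rightarrow> nat \<Rightarrow> 's \<Rightarrow> real)
    \<Rightarrow> nat \<Rightarrow> nat \<Rightarrow> real \<Rightarrow> ('s \<times> 'a) list list pmf \<Rightarrow> real \<Rightarrow> real" where
  "tau \<phi> Vt M H lam \<Omega> \<delta> =
     Sup {z. z \<ge> 0 \<and>
        measure_pmf.prob \<Omega> {D. lambda_min (lam *\<^sub>R mat 1 + G_off \<phi> Vt M H D) / real M \<ge> z} \<ge> 1 - \<delta>}"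

end

theory Submission
  imports Defs
begin

text \<open>Failure of uniform learnability forces every finite family of vectors phi(. | s,a) V to
  have a common nonzero orthogonal vector: otherwise, after rescaling the V into the unit
  cube, the Gram matrix of the family would have a positive smallest eigenvalue, which is
  attained by a minimiser of the Rayleigh quotient. Applied to the family behind G_off this
  gives, for every data set, some u \<noteq> 0 with G_off u = 0, so the smallest eigenvalue of
  lam I + G_off is exactly lam. The probability in the definition of tau is therefore 1 for
  z \<le> lam / M and 0 for larger z, whatever the transition model, the behaviour policies and
  the auxiliary vectors are.\<close>

lemma quadratic_nonneg_imp_linear_coeff_zero:
  fixes a b :: real
  assumes "b \<ge> 0" and nonneg: "\<And>t. 0 \<le> 2 * t * a + t\<^sup>2 * b"
  shows "a = 0"
proof -
  define t where "t = - a / (b + 1)"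
  have "b + 1 > 0" using assms(1) by simp
  moreover have "2 * t * a + t\<^sup>2 * b = - (a\<^sup>2 * (b + 2)) / (b + 1)\<^sup>2"
    using \<open>b + 1 > 0\<close> unfolding t_def
    by (simp add: power_divide divide_simps power2_eq_square) (simp add: algebra_simps)
  ultimately have "a\<^sup>2 * (b + 2) \<le> 0"
    using nonneg[of t] by (simp add: divide_le_0_iff)
  with assms(1) have "a\<^sup>2 \<le> 0" by (simp add: mult_le_0_iff)
  then show "a = 0" by simp
qed

lemma self_adjoint_quadratic_form_add:
  fixes f :: "'a::real_inner \<Rightarrow> 'a"
  assumes "linear f" and "\<And>v w. f v \<bullet> w = v \<bullet> f w"
  shows "(u + t *\<^sub>R w) \<bullet> f (u + t *\<^sub>R w) = u \<bullet> f u + 2 * t * (w \<bullet> f u) + t\<^sup>2 * (w \<bullet> f w)"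
proof -
  have "u \<bullet> f w = w \<bullet> f u" using assms(2)[of w u] by (simp add: inner_commute)
  with assms(1) show ?thesis
    by (simp add: linear_add linear_scale inner_add_left inner_add_right algebra_simps power2_eq_square)
qed

lemma self_adjoint_rayleigh_minimiser:
  fixes f :: "'a::euclidean_space \<Rightarrow> 'a"
  assumes lin: "linear f" and adj: "\<And>v w. f v \<bullet> w = v \<bullet> f w"
  shows "\<exists>u m. u \<noteq> 0 \<and> f u = m *\<^sub>R u \<and> (\<forall>v. m * (v \<bullet> v) \<le> v \<bullet> f v)"
proof -
  have cont: "continuous_on (sphere 0 1) (\<lambda>v. v \<bullet> f v)"
    by (intro continuous_intros linear_continuous_on lin[unfolded linear_conv_bounded_linear])
  obtain u where u: "u \<in> sphere 0 1"
    and u_min: "\<And>v. v \<in> sphere 0 1 \<Longrightarrow> u \<bullet> f u \<le> v \<bullet> f v"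
    using continuous_attains_inf[OF compact_sphere _ cont] by force
  define m where "m = u \<bullet> f u"
  have uu: "u \<bullet> u = 1" using u by (simp add: dot_square_norm)
  have rayleigh: "m * (v \<bullet> v) \<le> v \<bullet> f v" for v
  proof (cases "v = 0")
    case True
    then show ?thesis using lin by (simp add: linear_0)
  next
    case False
    define c where "c = 1 / norm v"
    have "c > 0" using False by (simp add: c_def)
    have "c *\<^sub>R v \<in> sphere 0 1" using False by (simp add: c_def)
    then have "m \<le> (c *\<^sub>R v) \<bullet> f (c *\<^sub>R v)" using u_min m_def by blast
    then have "m \<le> c\<^sup>2 * (v \<bullet> f v)" using lin by (simp add: linear_scale power2_eq_square)
    moreover have "c\<^sup>2 * (v \<bullet> v) = 1" using False by (simp add: c_def dot_square_norm field_simps)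
    ultimately have "m * (c\<^sup>2 * (v \<bullet> v)) \<le> c\<^sup>2 * (v \<bullet> f v)" by simp
    then show ?thesis using \<open>c > 0\<close> by (simp add: mult.left_commute)
  qed
  have "w \<bullet> (f u - m *\<^sub>R u) = 0" for w
  proof (rule quadratic_nonneg_imp_linear_coeff_zero)
    show "0 \<le> w \<bullet> f w - m * (w \<bullet> w)" using rayleigh[of w] by simp
    fix t :: real
    have "(u + t *\<^sub>R w) \<bullet> (u + t *\<^sub>R w) = u \<bullet> u + 2 * t * (w \<bullet> u) + t\<^sup>2 * (w \<bullet> w)"
      using self_adjoint_quadratic_form_add[OF linear_id] by simp
    moreover have "0 \<le> (u + t *\<^sub>R w) \<bullet> f (u + t *\<^sub>R w) - m * ((u + t *\<^sub>R w) \<bullet> (u + t *\<^sub>R w))"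
      using rayleigh[of "u + t *\<^sub>R w"] by simp
    ultimately show "0 \<le> 2 * t * (w \<bullet> (f u - m *\<^sub>R u)) + t\<^sup>2 * (w \<bullet> f w - m * (w \<bullet> w))"
      using self_adjoint_quadratic_form_add[OF lin adj] uu m_def
      by (simp add: inner_diff_right algebra_simps)
  qed
  from this[of "f u - m *\<^sub>R u"] have "f u = m *\<^sub>R u" by simp
  moreover have "u \<noteq> 0" using uu by auto
  ultimately show ?thesis using rayleigh by blast
qed

lemma lambda_min_eqI:
  fixes A :: "real^'n^'n"
  assumes "u \<noteq> 0" and "A *v u = m *\<^sub>R u" and "\<And>v. m * (v \<bullet> v) \<le> v \<bullet> (A *v v)"
  shows "lambda_min A = m"
  unfolding lambda_min_def
proof (rule cInf_eq_minimum)
  show "m \<in> {\<mu>. \<exists>v. v \<noteq> 0 \<and> A *v v = \<mu> *\<^sub>R v}" using assms(1,2) by blast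
next
  fix \<mu> assume "\<mu> \<in> {\<mu>. \<exists>v. v \<noteq> 0 \<and> A *v v = \<mu> *\<^sub>R v}"
  then obtain v where "v \<noteq> 0" and "A *v v = \<mu> *\<^sub>R v" by blast
  with assms(3)[of v] show "m \<le> \<mu>" by simp
qed

lemma outer_self_mult_vec: "outer x x *v v = (x \<bullet> v) *\<^sub>R x"
  by (simp add: vec_eq_iff matrix_vector_mult_def outer_def inner_vec_def
      sum_distrib_left sum_distrib_right mult_ac)

lemma sum_matrix_vector_mult: "finite K \<Longrightarrow> sum A K *v v = (\<Sum>k\<in>K. A k *v v)"
  for A :: "'k \<Rightarrow> real^'n^'m"
  by (induction K rule: finite_induct) (simp_all add: matrix_vector_mult_add_rdistrib)

lemma gram_mult_vec:
  "finite K \<Longrightarrow> (\<Sum>k\<in>K. outer (y k) (y k)) *v v = (\<Sum>k\<in>K. (y k \<bullet> v) *\<^sub>R y k)"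
  by (simp add: sum_matrix_vector_mult outer_self_mult_vec)

lemma inner_gram_mult_vec:
  "finite K \<Longrightarrow> w \<bullet> ((\<Sum>k\<in>K. outer (y k) (y k)) *v v) = (\<Sum>k\<in>K. (y k \<bullet> v) * (y k \<bullet> w))"
  by (simp add: gram_mult_vec inner_sum_right inner_commute)

lemma gram_common_kernel:
  fixes y :: "'k \<Rightarrow> real^'n"
  assumes "finite K" and "lambda_min (\<Sum>k\<in>K. outer (y k) (y k)) \<le> 0"
  shows "\<exists>u. u \<noteq> 0 \<and> (\<forall>k\<in>K. y k \<bullet> u = 0)"
proof -
  let ?S = "\<Sum>k\<in>K. outer (y k) (y k)"
  have "(?S *v v) \<bullet> w = v \<bullet> (?S *v w)" for v w
    using inner_gram_mult_vec[OF assms(1), where w = w and v = v]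
      inner_gram_mult_vec[OF assms(1), where w = v and v = w]
    by (simp add: inner_commute[of "?S *v v"] mult.commute)
  then obtain u m where "u \<noteq> 0" and eig: "?S *v u = m *\<^sub>R u"
    and rayleigh: "\<And>v. m * (v \<bullet> v) \<le> v \<bullet> (?S *v v)"
    using self_adjoint_rayleigh_minimiser[of "(*v) ?S"] by auto
  with assms(2) have "m \<le> 0" using lambda_min_eqI by metis
  then have "m * (u \<bullet> u) \<le> 0" by (simp add: mult_nonpos_nonneg)
  with eig have "(\<Sum>k\<in>K. (y k \<bullet> u) * (y k \<bullet> u)) \<le> 0"
    using inner_gram_mult_vec[OF assms(1), where y = y and w = u and v = u] by simp
  then have "(\<Sum>k\<in>K. (y k \<bullet> u) * (y k \<bullet> u)) = 0"
    by (rule antisym) (simp add: sum_nonneg)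
  then have "\<forall>k\<in>K. (y k \<bullet> u) * (y k \<bullet> u) = 0"
    using assms(1) by (simp add: sum_nonneg_eq_0_iff)
  with \<open>u \<noteq> 0\<close> show ?thesis by auto
qed

lemma lambda_min_scaleR_one_add_gram:
  fixes y :: "'k \<Rightarrow> real^'n"
  assumes "finite K" and "u \<noteq> 0" and "\<forall>k\<in>K. y k \<bullet> u = 0"
  shows "lambda_min (c *\<^sub>R mat 1 + (\<Sum>k\<in>K. outer (y k) (y k))) = c"
proof (rule lambda_min_eqI[OF assms(2)])
  let ?S = "\<Sum>k\<in>K. outer (y k) (y k)"
  have shift: "(c *\<^sub>R mat 1 + ?S) *v v = c *\<^sub>R v + ?S *v v" for v
    by (simp add: matrix_vector_mult_add_rdistrib scaleR_matrix_vector_assoc[symmetric])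
  show "(c *\<^sub>R mat 1 + ?S) *v u = c *\<^sub>R u"
    using assms by (simp add: shift gram_mult_vec)
  show "c * (v \<bullet> v) \<le> v \<bullet> ((c *\<^sub>R mat 1 + ?S) *v v)" for v
    using assms(1) by (simp add: shift inner_add_right inner_gram_mult_vec sum_nonneg)
qed

lemma not_uniformly_learnable_lambda_min_nonpos:
  fixes \<phi> :: "'s::finite \<Rightarrow> 'a::finite \<Rightarrow> 's \<Rightarrow> real^'d" and I L :: nat
  assumes "\<not> uniformly_learnable \<phi>" and "I > 0" and "L > 0" and "\<And>l s'. l < L \<Longrightarrow> \<bar>V l s'\<bar> \<le> 1"
  shows "lambda_min (\<Sum>i<I. \<Sum>l<L. outer (phiV \<phi> (fst (sa i)) (snd (sa i)) (V l))
                                         (phiV \<phi> (fst (sa i)) (snd (sa i)) (V l))) \<le> 0"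
    (is "lambda_min ?S \<le> 0")
proof (rule ccontr)
  assume "\<not> lambda_min ?S \<le> 0"
  then have "uniformly_learnable \<phi>"
    unfolding uniformly_learnable_def using assms(2-4)
    by (intro exI[of _ I] exI[of _ L] conjI exI[of _ V] exI[of _ sa] exI[of _ "lambda_min ?S"]) auto
  with assms(1) show False ..
qed

lemma not_uniformly_learnable_common_kernel:
  fixes \<phi> :: "'s::finite \<Rightarrow> 'a::finite \<Rightarrow> 's \<Rightarrow> real^'d"
    and sa :: "'k \<Rightarrow> 's \<times> 'a" and W :: "'k \<Rightarrow> 's \<Rightarrow> real"
  assumes not_ul: "\<not> uniformly_learnable \<phi>" and "finite K"
  shows "\<exists>u. u \<noteq> 0 \<and> (\<forall>k\<in>K. phiV \<phi> (fst (sa k)) (snd (sa k)) (W k) \<bullet> u = 0)"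
proof (cases "K = {}")
  case True
  have "(1::real^'d) \<noteq> 0" by simp
  with True show ?thesis by blast
next
  case False
  define n where "n = card K"
  have "n > 0" using False assms(2) by (simp add: n_def card_gt_0_iff)
  obtain e where e: "bij_betw e {..<n} K"
    using ex_bij_betw_nat_finite[OF assms(2)] by (auto simp: n_def atLeast0LessThan)
  \<comment> \<open>Enumerate K by e, pair the i-th state-action pair with the i-th probe vector rescaled into
    the unit cube, and use only the diagonal terms of the resulting Gram matrix.\<close>
  define c where "c k = 1 / (1 + (\<Sum>s\<in>UNIV. \<bar>W k s\<bar>))" for k
  define V where "V l s = c (e l) * W (e l) s" for l s
  define y where "y il = phiV \<phi> (fst (sa (e (fst il)))) (snd (sa (e (fst il)))) (V (snd il))" for il
  have c_pos: "c k > 0" for k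
    unfolding c_def by (simp add: add_pos_nonneg sum_nonneg)
  have V_bound: "\<bar>V l s\<bar> \<le> 1" for l s
  proof -
    have "\<bar>W (e l) s\<bar> \<le> (\<Sum>s\<in>UNIV. \<bar>W (e l) s\<bar>)" by (rule member_le_sum) auto
    then show ?thesis
      using c_pos[of "e l"] by (simp add: V_def c_def abs_mult divide_le_eq_1)
  qed
  have "lambda_min (\<Sum>i<n. \<Sum>l<n. outer (y (i, l)) (y (i, l))) \<le> 0"
    using not_uniformly_learnable_lambda_min_nonpos[OF not_ul \<open>n > 0\<close> \<open>n > 0\<close>,
        where V = V and sa = "\<lambda>i. sa (e i)"] V_bound
    unfolding y_def by simp
  then obtain u where "u \<noteq> 0" and u: "\<forall>il\<in>{..<n} \<times> {..<n}. y il \<bullet> u = 0"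
    using gram_common_kernel[of "{..<n} \<times> {..<n}" y] by (auto simp: sum.cartesian_product)
  have "phiV \<phi> (fst (sa (e i))) (snd (sa (e i))) (W (e i)) \<bullet> u = 0" if "i < n" for i
  proof -
    have "y (i, i) \<bullet> u = 0" using u that by blast
    moreover have "y (i, i) = c (e i) *\<^sub>R phiV \<phi> (fst (sa (e i))) (snd (sa (e i))) (W (e i))"
      by (simp add: y_def V_def phiV_def scaleR_sum_right)
    ultimately show ?thesis using c_pos[of "e i"] by simp
  qed
  moreover have "K = e ` {..<n}" using e by (simp add: bij_betw_def)
  ultimately show ?thesis using \<open>u \<noteq> 0\<close> by auto
qed

lemma tau_eq_of_constant_lambda_min:
  assumes "\<And>D. lambda_min (lam *\<^sub>R mat 1 + G_off \<phi> Vt M H D) = r"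
    and "0 \<le> r / real M" and "0 \<le> \<delta>" and "\<delta> < 1"
  shows "tau \<phi> Vt M H lam \<Omega> \<delta> = r / real M"
proof -
  have "{z. z \<ge> 0 \<and> measure_pmf.prob \<Omega> {D. lambda_min (lam *\<^sub>R mat 1 + G_off \<phi> Vt M H D) / real M \<ge> z}
          \<ge> 1 - \<delta>} = {0..r / real M}"
    using assms by (auto simp: not_le)
  then show ?thesis
    unfolding tau_def using assms(2) by (simp add: cSup_atLeastAtMost)
qed

theorem proposition1:
  fixes \<phi> :: "'s::finite \<Rightarrow> 'a::finite \<Rightarrow> 's \<Rightarrow> real^'d"
    and \<theta> :: "real^'d"
    and P :: "'s \<Rightarrow> 'a \<Rightarrow> 's pmf"
    and \<mu> :: "('s \<times> 'a) list list \<Rightarrow> 's pmf"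
    and \<pi> :: "('s \<times> 'a) list list \<Rightarrow> ('s \<times> 'a) list \<Rightarrow> 's \<Rightarrow> 'a pmf"
    and Vt :: "('s \<times> 'a) list list \<Rightarrow> nat \<Rightarrow> nat \<Rightarrow> 's \<Rightarrow> real"
    and M H :: nat and lam \<delta> :: real
  assumes lin_mix: "\<And>s a s'. pmf (P s a) s' = \<theta> \<bullet> \<phi> s a s'"
    and phi_bound: "\<And>s a j. (\<Sum>s'\<in>UNIV. \<bar>\<phi> s a s' $ j\<bar>) \<le> 1"
    and not_ul: "\<not> uniformly_learnable \<phi>"
    and M_pos: "M > 0"
    and Vt_last: "\<And>D m. Vt D m H = (\<lambda>_. 0)"
    and lam_pos: "lam > 0"
    and delta: "0 < \<delta>" "\<delta> < 1"
  shows "tau \<phi> Vt M H lam (gen_data P \<mu> \<pi> H [] M) \<delta> = lam / real M"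
proof -
  have "lambda_min (lam *\<^sub>R mat 1 + G_off \<phi> Vt M H D) = lam" for D
  proof -
    let ?K = "{..<M} \<times> {..<H}"
    define x where "x k = phiV \<phi> (fst (D ! fst k ! snd k)) (snd (D ! fst k ! snd k))
                               (Vt D (fst k) (Suc (snd k)))" for k
    have "G_off \<phi> Vt M H D = (\<Sum>k\<in>?K. outer (x k) (x k))"
      unfolding G_off_def x_def by (simp add: sum.cartesian_product case_prod_beta)
    moreover obtain u where "u \<noteq> 0" and "\<forall>k\<in>?K. x k \<bullet> u = 0"
      using not_uniformly_learnable_common_kernel[OF not_ul, of ?K "\<lambda>k. D ! fst k ! snd k"
          "\<lambda>k. Vt D (fst k) (Suc (snd k))"] unfolding x_def by auto
    ultimately show ?thesis by (simp add: lambda_min_scaleR_one_add_gram)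
  qed
  with lam_pos M_pos delta show ?thesis by (simp add: tau_eq_of_constant_lambda_min)
qed

end
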